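(* Let $\Sigma=\{a_1,a_2,c\}$. For $k<m$ in $\mathbb{N}$ let $L_{k,m}$ be the set of trees obtained from $t_c$ by grafting some tree $t'\in L_{\neg a_1\vee\neg a_2}$ on node $l^k r$ and grafting $t_{a_1}$ on node $l^m$; let $L_m:=\bigcup_{k<m}L_{k,m}$ and $L^{fa}:=\bigcup_{m\in\mathbb{N}}L_m$. Then there is a finitely ambiguous parity tree automaton that accepts $L^{fa}$.
   Context: Trees over $\Sigma$ are functions $t:\{l,r\}^*\to\Sigma$; $t_\sigma$ is the tree with all nodes labeled $\sigma$; grafting $t_2$ on node $v$ in $t_1$ replaces the subtree of $t_1$ rooted at $v$ by $t_2$. $L_{\neg a_1\vee\neg a_2}$ is the set of trees over $\Sigma$ with no $a_1$-labeled node or with no $a_2$-labeled node. A parity tree automaton (PTA) $\mathcal{A}=(Q,\Sigma,Q_I,\delta,\mathbb{C})$ ($Q$ finite, $Q_I\subseteq Q$, $\delta\subseteq Q\times\Sigma\times Q\times Q$, $\mathbb{C}:Q\to\mathbb{N}$) has computations $\phi:\{l,r\}^*\to Q$ with $\phi(\epsilon)\in Q_I$, $(\phi(v),t(v),\phi(vl),\phi(vr))\in\delta$, accepting if on every branch the largest color seen infinitely often is even. It is finitely ambiguous if on every tree it has finitely many accepting computations. *)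

theory Defs
  imports Main
begin

datatype dir = Lft | Rgt

type_synonym node = "dir list"
type_synonym 'a tree = "node \<Rightarrow> 'a"

datatype sym = A1 | A2 | C

definition const_tree :: "'a \<Rightarrow> 'a tree" where
  "const_tree \<sigma> = (\<lambda>_. \<sigma>)"

definition graft :: "'a tree \<Rightarrow> node \<Rightarrow> 'a tree \<Rightarrow> 'a tree" where
  "graft t1 v t2 = (\<lambda>w. if take (length v) w = v then t2 (drop (length v) w) else t1 w)"

definition L_not_a1_or_not_a2 :: "sym tree set" where
  "L_not_a1_or_not_a2 = {t. (\<forall>v. t v \<noteq> A1) \<or> (\<forall>v. t v \<noteq> A2)}"

definition L_km :: "nat \<Rightarrow> nat \<Rightarrow> sym tree set" where
  "L_km k m = {graft (graft (const_tree C) (replicate k Lft @ [Rgt]) t') (replicate m Lft) (const_tree A1)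
               | t'. t' \<in> L_not_a1_or_not_a2}"

definition L_m :: "nat \<Rightarrow> sym tree set" where
  "L_m m = (\<Union>k\<in>{k. k < m}. L_km k m)"

definition L_fa :: "sym tree set" where
  "L_fa = (\<Union>m. L_m m)"

record ('q, 'a) pta =
  states :: "'q set"
  initial :: "'q set"
  trans :: "('q \<times> 'a \<times> 'q \<times> 'q) set"
  colour :: "'q \<Rightarrow> nat"

definition wf_pta :: "('q, 'a) pta \<Rightarrow> bool" where
  "wf_pta A \<longleftrightarrow> finite (states A) \<and> initial A \<subseteq> states A \<and>
     trans A \<subseteq> states A \<times> UNIV \<times> states A \<times> states A"

definition computation :: "('q, 'a) pta \<Rightarrow> 'a tree \<Rightarrow> (node \<Rightarrow> 'q) \<Rightarrow> bool" where
  "computation A t \<phi> \<longleftrightarrow> \<phi> [] \<in> initial A \<and>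
     (\<forall>v. (\<phi> v, t v, \<phi> (v @ [Lft]), \<phi> (v @ [Rgt])) \<in> trans A)"

definition branch_node :: "(nat \<Rightarrow> dir) \<Rightarrow> nat \<Rightarrow> node" where
  "branch_node b n = map b [0..<n]"

definition parity_ok :: "('q, 'a) pta \<Rightarrow> (node \<Rightarrow> 'q) \<Rightarrow> (nat \<Rightarrow> dir) \<Rightarrow> bool" where
  "parity_ok A \<phi> b \<longleftrightarrow>
     (\<exists>c. even c \<and> infinite {n. colour A (\<phi> (branch_node b n)) = c} \<and>
          (\<forall>c'. infinite {n. colour A (\<phi> (branch_node b n)) = c'} \<longrightarrow> c' \<le> c))"

definition accepting :: "('q, 'a) pta \<Rightarrow> 'a tree \<Rightarrow> (node \<Rightarrow> 'q) \<Rightarrow> bool" where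
  "accepting A t \<phi> \<longleftrightarrow> computation A t \<phi> \<and> (\<forall>b. parity_ok A \<phi> b)"

definition lang :: "('q, 'a) pta \<Rightarrow> 'a tree set" where
  "lang A = {t. \<exists>\<phi>. accepting A t \<phi>}"

definition finitely_ambiguous :: "('q, 'a) pta \<Rightarrow> bool" where
  "finitely_ambiguous A \<longleftrightarrow> (\<forall>t. finite {\<phi>. accepting A t \<phi>})"

end

theory Submission
  imports Defs
begin

(* The automaton walks down the leftmost branch in state 0, switches to state 1 below a guessed
   node l^k and has to read a1 in state 1.  At l^k it sends one of the sinks 4, 5 to the right
   child, which accept exactly the trees without a1 resp. without a2, while the sinks 2 and 3
   check that all other right subtrees are all-c resp. all-a1.  Only states 0 and 1 have an odd
   colour, so an accepting run must leave them on the leftmost branch, which it can only do at the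
   first a1, at depth m.  Hence an accepting run is determined by m, which is read off the tree,
   by the guess k < m and by the choice between 4 and 5: a tree has at most 2m accepting runs. *)

fun comb :: "(nat \<Rightarrow> 'a) \<Rightarrow> (nat \<Rightarrow> 'a tree) \<Rightarrow> 'a tree" where
  "comb s b [] = s 0"
| "comb s b (Lft # v) = comb (\<lambda>i. s (Suc i)) (\<lambda>i. b (Suc i)) v"
| "comb s b (Rgt # w) = b 0 w"

lemma comb_spine [simp]: "comb s b (replicate i Lft) = s i"
  by (induction i arbitrary: s b) auto

lemma comb_branch [simp]: "comb s b (replicate i Lft @ Rgt # w) = b i w"
  by (induction i arbitrary: s b) auto

lemma node_cases:
  obtains (spine) i where "v = replicate i Lft" | (branch) i w where "v = replicate i Lft @ Rgt # w"
proof (induction v arbitrary: thesis)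
  case Nil
  show ?case using Nil.prems(1)[of 0] by simp
next
  case (Cons d v)
  show ?case
  proof (cases d)
    case Lft
    show ?thesis
    proof (rule Cons.IH)
      fix i assume "v = replicate i Lft"
      then show ?thesis using Cons.prems(1)[of "Suc i"] Lft by simp
    next
      fix i w assume "v = replicate i Lft @ Rgt # w"
      then show ?thesis using Cons.prems(2)[of "Suc i" w] Lft by simp
    qed
  next
    case Rgt
    then show ?thesis using Cons.prems(2)[of 0 v] by simp
  qed
qed

lemma tree_eq_comb_iff:
  "t = comb s b \<longleftrightarrow> (\<forall>i. t (replicate i Lft) = s i) \<and> (\<forall>i w. t (replicate i Lft @ Rgt # w) = b i w)"
proof
  assume *: "(\<forall>i. t (replicate i Lft) = s i) \<and> (\<forall>i w. t (replicate i Lft @ Rgt # w) = b i w)"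
  show "t = comb s b"
  proof
    fix v show "t v = comb s b v" by (cases v rule: node_cases) (simp_all add: *)
  qed
qed auto

lemma spine_eq_append_iff:
  "replicate i Lft = replicate j Lft @ u \<longleftrightarrow> j \<le> i \<and> u = replicate (i - j) Lft"
proof (induction j arbitrary: i)
  case (Suc j)
  then show ?case by (cases i) simp_all
qed auto

lemma branch_eq_append_iff:
  "replicate i Lft @ Rgt # w = replicate j Lft @ u \<longleftrightarrow> j \<le> i \<and> u = replicate (i - j) Lft @ Rgt # w"
proof (induction j arbitrary: i)
  case (Suc j)
  then show ?case by (cases i) simp_all
qed auto

lemma spine_neq_branch: "replicate i Lft \<noteq> replicate j Lft @ Rgt # w"
  by (metis dir.distinct(1) in_set_conv_decomp in_set_replicate)

lemma branch_eq_branch_iff: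
  "replicate i Lft @ Rgt # w = replicate j Lft @ Rgt # w' \<longleftrightarrow> i = j \<and> w = w'"
proof (induction i arbitrary: j)
  case 0
  then show ?case by (cases j) auto
next
  case (Suc i)
  then show ?case by (cases j) auto
qed

lemma graft_eq: "graft t1 v t2 w = (if \<exists>u. w = v @ u then t2 (drop (length v) w) else t1 w)"
  unfolding graft_def by (metis append_eq_conv_conj)

lemma const_tree_eq_comb: "const_tree a = comb (\<lambda>_. a) (\<lambda>_. const_tree a)"
  by (simp add: tree_eq_comb_iff const_tree_def)

lemma graft_comb_spine:
  "graft (comb s b) (replicate m Lft) t =
   comb (\<lambda>i. if m \<le> i then t (replicate (i - m) Lft) else s i)
        (\<lambda>i w. if m \<le> i then t (replicate (i - m) Lft @ Rgt # w) else b i w)"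
  by (simp add: tree_eq_comb_iff graft_eq spine_eq_append_iff branch_eq_append_iff)

lemma graft_comb_branch:
  "graft (comb s b) (replicate k Lft @ [Rgt]) t = comb s (b(k := t))"
  by (auto simp: tree_eq_comb_iff graft_eq branch_eq_branch_iff spine_neq_branch)

lemma computation_sink:
  assumes "computation A t \<phi>" "\<phi> u = q" "\<And>a x y. (q, a, x, y) \<in> trans A \<Longrightarrow> x = q \<and> y = q"
  shows "\<phi> (u @ w) = q"
proof (induction w rule: rev_induct)
  case (snoc d w)
  have "(\<phi> (u @ w), t (u @ w), \<phi> (u @ w @ [Lft]), \<phi> (u @ w @ [Rgt])) \<in> trans A"
    using assms(1) unfolding computation_def by (metis append_assoc)
  with snoc assms(3) show ?case by (cases d) auto
qed (use assms(2) in simp)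

lemma parity_ok_iff_finite_odd:
  assumes "\<And>q. colour A q \<le> 1"
  shows "parity_ok A \<phi> b \<longleftrightarrow> finite {n. colour A (\<phi> (branch_node b n)) = 1}"
proof -
  define c where "c n = colour A (\<phi> (branch_node b n))" for n
  have c_le: "c n \<le> 1" for n
    using assms by (simp add: c_def)
  have high: "{n. c n = d} = {}" if "2 \<le> d" for d
  proof -
    have "c n \<noteq> d" for n
      using c_le[of n] that by linarith
    then show ?thesis by simp
  qed
  have zero_eq: "{n. c n = 0} = - {n. c n = 1}"
    using c_le by (auto simp: le_Suc_eq)
  show ?thesis
    unfolding parity_ok_def c_def[symmetric]
  proof
    assume "\<exists>d. even d \<and> infinite {n. c n = d} \<and> (\<forall>d'. infinite {n. c n = d'} \<longrightarrow> d' \<le> d)"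
    then obtain d where d: "even d" "infinite {n. c n = d}" "\<forall>d'. infinite {n. c n = d'} \<longrightarrow> d' \<le> d"
      by blast
    show "finite {n. c n = 1}"
    proof (rule ccontr)
      assume "infinite {n. c n = 1}"
      with d(3) have "1 \<le> d"
        by blast
      with d(1) have "2 \<le> d"
        by presburger
      with high d(2) show False
        by simp
    qed
  next
    assume fin: "finite {n. c n = 1}"
    have "infinite {n. c n = 0}"
      using fin by (simp add: zero_eq Compl_eq_Diff_UNIV Diff_infinite_finite)
    moreover have "d \<le> 0" if "infinite {n. c n = d}" for d
    proof (rule ccontr)
      assume "\<not> d \<le> 0"
      then have "d = 1 \<or> 2 \<le> d"
        by linarith
      with that fin high show False
        by auto
    qed
    ultimately show "\<exists>d. even d \<and> infinite {n. c n = d} \<and> (\<forall>d'. infinite {n. c n = d'} \<longrightarrow> d' \<le> d)"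
      by blast
  qed
qed

lemma computation_comb_iff:
  "computation A t (comb s (\<lambda>i _. q i)) \<longleftrightarrow>
     s 0 \<in> initial A \<and>
     (\<forall>i. (s i, t (replicate i Lft), s (Suc i), q i) \<in> trans A) \<and>
     (\<forall>i w. (q i, t (replicate i Lft @ Rgt # w), q i, q i) \<in> trans A)"
  (is "_ \<longleftrightarrow> _ \<and> ?spine \<and> ?branches")
proof -
  let ?\<phi> = "comb s (\<lambda>i _. q i)"
  have "(\<forall>v. (?\<phi> v, t v, ?\<phi> (v @ [Lft]), ?\<phi> (v @ [Rgt])) \<in> trans A) \<longleftrightarrow> ?spine \<and> ?branches"
  proof (intro iffI conjI allI)
    fix v
    assume "?spine \<and> ?branches"
    then show "(?\<phi> v, t v, ?\<phi> (v @ [Lft]), ?\<phi> (v @ [Rgt])) \<in> trans A"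
      by (cases v rule: node_cases) (simp_all add: replicate_append_same)
  next
    assume run: "\<forall>v. (?\<phi> v, t v, ?\<phi> (v @ [Lft]), ?\<phi> (v @ [Rgt])) \<in> trans A"
    show "(s i, t (replicate i Lft), s (Suc i), q i) \<in> trans A" for i
      using run[rule_format, of "replicate i Lft"] by (simp add: replicate_append_same)
    show "(q i, t (replicate i Lft @ Rgt # w), q i, q i) \<in> trans A" for i w
      using run[rule_format, of "replicate i Lft @ Rgt # w"] by simp
  qed
  then show ?thesis
    unfolding computation_def by simp
qed

definition fa_trans :: "(nat \<times> sym \<times> nat \<times> nat) set" where
  "fa_trans = {(0, C, 0, 2), (0, C, 1, 4), (0, C, 1, 5), (1, C, 1, 2), (1, A1, 3, 3),
     (2, C, 2, 2), (3, A1, 3, 3), (4, A2, 4, 4), (4, C, 4, 4), (5, A1, 5, 5), (5, C, 5, 5)}"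

definition fa_aut :: "(nat, sym) pta" where
  "fa_aut = \<lparr>states = {0..5}, initial = {0}, trans = fa_trans, colour = (\<lambda>q. if q \<le> 1 then 1 else 0)\<rparr>"

lemma fa_aut_simps [simp]:
  "states fa_aut = {0..5}" "initial fa_aut = {0}" "trans fa_aut = fa_trans"
  "colour fa_aut q = (if q \<le> 1 then 1 else 0)"
  by (simp_all add: fa_aut_def)

lemma wf_fa_aut: "wf_pta fa_aut"
  by (auto simp: wf_pta_def fa_trans_def)

definition fa_spine :: "nat \<Rightarrow> nat \<Rightarrow> nat \<Rightarrow> nat" where
  "fa_spine k m i = (if i \<le> k then 0 else if i \<le> m then 1 else 3)"

definition fa_run :: "nat \<Rightarrow> nat \<Rightarrow> nat \<Rightarrow> node \<Rightarrow> nat" where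
  "fa_run k m g = comb (fa_spine k m) (\<lambda>i _. if m \<le> i then 3 else if i = k then g else 2)"

definition fa_tree :: "nat \<Rightarrow> nat \<Rightarrow> sym tree \<Rightarrow> sym tree" where
  "fa_tree k m t' = comb (\<lambda>i. if i < m then C else A1)
     (\<lambda>i. if m \<le> i then const_tree A1 else if i = k then t' else const_tree C)"

lemma L_km_eq_image: "L_km k m = fa_tree k m ` L_not_a1_or_not_a2"
proof -
  \<comment> \<open>\<open>T\<close> is abstracted because rewriting with \<open>const_tree_eq_comb\<close> itself would loop.\<close>
  have "graft (graft T (replicate k Lft @ [Rgt]) t') (replicate m Lft) (const_tree A1) = fa_tree k m t'"
    if "T = comb (\<lambda>_. C) (\<lambda>_. const_tree C)" for T t'
    unfolding that graft_comb_branch graft_comb_spine fa_tree_def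
    by (simp add: tree_eq_comb_iff const_tree_def)
  from this[OF const_tree_eq_comb] show ?thesis
    unfolding L_km_def by (simp add: Setcompr_eq_image)
qed

lemma fa_spine_shape:
  fixes s :: "nat \<Rightarrow> nat"
  assumes "s 0 = 0"
    and step0: "\<And>i. s i = 0 \<Longrightarrow> s (Suc i) \<in> {0, 1}"
    and step1: "\<And>i. s i = 1 \<Longrightarrow> s (Suc i) \<in> {1, 3}"
    and step3: "\<And>i. s i = 3 \<Longrightarrow> s (Suc i) = 3"
    and leaves: "s n \<notin> {0, 1}"
  obtains k m where "k < m" "s = fa_spine k m"
proof -
  obtain k where zero: "\<And>i. i \<le> k \<Longrightarrow> s i = 0" and "s (Suc k) \<noteq> 0"
    using ex_least_nat_less[of "\<lambda>i. s i \<noteq> 0" n] leaves \<open>s 0 = 0\<close> by auto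
  with step0[of k] have one: "s (Suc k) = 1"
    by auto
  obtain m where low: "\<And>i. i \<le> m \<Longrightarrow> s i \<in> {0, 1}" and high: "s (Suc m) \<notin> {0, 1}"
    using ex_least_nat_less[of "\<lambda>i. s i \<notin> {0, 1}" n] leaves \<open>s 0 = 0\<close> by auto
  have "k < m"
  proof (rule ccontr)
    assume "\<not> k < m"
    then have "Suc m \<le> k \<or> m = k"
      by linarith
    with zero high one show False
      by fastforce
  qed
  have "s i = fa_spine k m i" for i
  proof (induction i)
    case (Suc i)
    consider "i < k" | "i = k" | "k < i" "i < m" | "i = m" | "m < i"
      by linarith
    then show ?case
    proof cases
      case 1
      with zero[of "Suc i"] show ?thesis by (simp add: fa_spine_def)
    next
      case 2
      with one \<open>k < m\<close> show ?thesis by (simp add: fa_spine_def)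
    next
      case 3
      with Suc.IH low[of "Suc i"] step1[of i] show ?thesis by (auto simp: fa_spine_def)
    next
      case 4
      with Suc.IH high step1[of i] \<open>k < m\<close> show ?thesis by (auto simp: fa_spine_def)
    next
      case 5
      with Suc.IH step3[of i] \<open>k < m\<close> show ?thesis by (simp add: fa_spine_def)
    qed
  qed (simp add: \<open>s 0 = 0\<close> fa_spine_def)
  with \<open>k < m\<close> that show ?thesis
    by auto
qed

lemma parity_ok_fa_run:
  assumes "2 \<le> g"
  shows "parity_ok fa_aut (fa_run k m g) b"
proof -
  have shallow: "length v \<le> max k m" if "fa_run k m g v \<le> 1" for v
  proof (cases v rule: node_cases)
    case (spine i)
    with that show ?thesis by (simp add: fa_run_def fa_spine_def split: if_splits)
  next
    case (branch i w)
    with that assms show ?thesis by (simp add: fa_run_def split: if_splits)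
  qed
  have "n \<le> max k m" if "fa_run k m g (branch_node b n) \<le> 1" for n
    using shallow[OF that] by (simp add: branch_node_def)
  then have "{n. colour fa_aut (fa_run k m g (branch_node b n)) = 1} \<subseteq> {..max k m}"
    by (auto split: if_splits)
  then show ?thesis
    by (simp add: parity_ok_iff_finite_odd finite_subset)
qed

lemma computation_fa_run_iff:
  assumes "k < m" "g \<in> {4, 5}"
  shows "computation fa_aut t (fa_run k m g) \<longleftrightarrow>
    (\<exists>t'. t = fa_tree k m t' \<and> (\<forall>w. t' w \<noteq> (if g = 4 then A1 else A2)))"
proof -
  let ?q = "\<lambda>i. if m \<le> i then 3 else if i = k then g else 2"
  let ?spine = "\<forall>i. t (replicate i Lft) = (if i < m then C else A1)"
  let ?branches = "\<forall>i w. if m \<le> i then t (replicate i Lft @ Rgt # w) = A1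
    else if i = k then t (replicate i Lft @ Rgt # w) \<noteq> (if g = 4 then A1 else A2)
    else t (replicate i Lft @ Rgt # w) = C"
  have spine: "(fa_spine k m i, a, fa_spine k m (Suc i), ?q i) \<in> fa_trans \<longleftrightarrow> a = (if i < m then C else A1)"
    for i a using assms by (auto simp: fa_trans_def fa_spine_def)
  have branch: "(?q i, a, ?q i, ?q i) \<in> fa_trans \<longleftrightarrow>
      (if m \<le> i then a = A1 else if i = k then a \<noteq> (if g = 4 then A1 else A2) else a = C)"
    for i a using assms by (cases a) (auto simp: fa_trans_def)
  have "computation fa_aut t (fa_run k m g) \<longleftrightarrow> ?spine \<and> ?branches"
    unfolding fa_run_def computation_comb_iff fa_aut_simps spine branch
    by (simp add: fa_spine_def)
  also have "?spine \<and> ?branches \<longleftrightarrow>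
      (\<exists>t'. t = fa_tree k m t' \<and> (\<forall>w. t' w \<noteq> (if g = 4 then A1 else A2)))"
  proof
    assume "?spine \<and> ?branches"
    then have "t = fa_tree k m (\<lambda>w. t (replicate k Lft @ Rgt # w)) \<and>
        (\<forall>w. t (replicate k Lft @ Rgt # w) \<noteq> (if g = 4 then A1 else A2))"
      using \<open>k < m\<close> by (auto simp: fa_tree_def tree_eq_comb_iff const_tree_def split: if_splits)
    then show "\<exists>t'. t = fa_tree k m t' \<and> (\<forall>w. t' w \<noteq> (if g = 4 then A1 else A2))"
      by blast
  next
    assume "\<exists>t'. t = fa_tree k m t' \<and> (\<forall>w. t' w \<noteq> (if g = 4 then A1 else A2))"
    then show "?spine \<and> ?branches"
      using \<open>k < m\<close> by (auto simp: fa_tree_def const_tree_def)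
  qed
  finally show ?thesis .
qed

lemma computation_fa_aut_eq_comb:
  assumes comp: "computation fa_aut t \<phi>"
  shows "\<phi> = comb (\<lambda>i. \<phi> (replicate i Lft)) (\<lambda>i _. \<phi> (replicate i Lft @ [Rgt]))"
proof -
  have "\<phi> ((replicate i Lft @ [Rgt]) @ w) = \<phi> (replicate i Lft @ [Rgt])" for i w
  proof (rule computation_sink[OF comp refl])
    have "2 \<le> \<phi> (replicate i Lft @ [Rgt])"
      using comp[unfolded computation_def, THEN conjunct2, rule_format, of "replicate i Lft"]
      by (auto simp: fa_trans_def)
    then show "x = \<phi> (replicate i Lft @ [Rgt]) \<and> y = \<phi> (replicate i Lft @ [Rgt])"
      if "(\<phi> (replicate i Lft @ [Rgt]), a, x, y) \<in> trans fa_aut" for a x y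
      using that by (auto simp: fa_trans_def)
  qed
  then show ?thesis
    by (simp add: tree_eq_comb_iff)
qed

lemma accepting_fa_aut_leaves_odd_states:
  assumes "accepting fa_aut t \<phi>"
  shows "\<exists>n. \<phi> (replicate n Lft) \<notin> {0, 1}"
proof (rule ccontr)
  assume "\<nexists>n. \<phi> (replicate n Lft) \<notin> {0, 1}"
  then have "\<phi> (replicate n Lft) \<in> {0, 1}" for n
    by blast
  then have "\<phi> (replicate n Lft) \<le> 1" for n
    using le_less by fastforce
  then have "{n. colour fa_aut (\<phi> (branch_node (\<lambda>_. Lft) n)) = 1} = UNIV"
    by (simp add: branch_node_def map_replicate_const)
  moreover have "parity_ok fa_aut \<phi> (\<lambda>_. Lft)"
    using assms unfolding accepting_def by blast
  ultimately show False
    by (simp add: parity_ok_iff_finite_odd)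
qed

lemma accepting_fa_aut_run:
  assumes "accepting fa_aut t \<phi>"
  obtains k m g where "k < m" "g \<in> {4, 5}" "\<phi> = fa_run k m g"
proof -
  have comp: "computation fa_aut t \<phi>"
    using assms unfolding accepting_def by blast
  define s where "s = (\<lambda>i. \<phi> (replicate i Lft))"
  define q where "q = (\<lambda>i. \<phi> (replicate i Lft @ [Rgt]))"
  have \<phi>_comb: "\<phi> = comb s (\<lambda>i _. q i)"
    unfolding s_def q_def by (rule computation_fa_aut_eq_comb[OF comp])
  with comp have "s 0 = 0" and step: "\<And>i. (s i, t (replicate i Lft), s (Suc i), q i) \<in> fa_trans"
    by (simp_all add: computation_comb_iff)
  from assms obtain n where leaves: "s n \<notin> {0, 1}"
    unfolding s_def by (blast dest: accepting_fa_aut_leaves_odd_states)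
  have step0: "s (Suc i) \<in> {0, 1}" if "s i = 0" for i
    using step[of i] that by (auto simp: fa_trans_def)
  have step1: "s (Suc i) \<in> {1, 3}" if "s i = 1" for i
    using step[of i] that by (auto simp: fa_trans_def)
  have step3: "s (Suc i) = 3" if "s i = 3" for i
    using step[of i] that by (auto simp: fa_trans_def)
  obtain k m where "k < m" and s: "s = fa_spine k m"
    by (rule fa_spine_shape[of s, OF \<open>s 0 = 0\<close> step0 step1 step3 leaves])
  define g where "g = q k"
  have "q i = (if m \<le> i then 3 else if i = k then g else 2)" for i
    using step[of i] \<open>k < m\<close> by (auto simp: g_def s fa_spine_def fa_trans_def split: if_splits)
  then have "\<phi> = fa_run k m g"
    unfolding \<phi>_comb s fa_run_def by simp
  moreover have "g \<in> {4, 5}"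
    using step[of k] \<open>k < m\<close> by (auto simp: g_def s fa_spine_def fa_trans_def)
  ultimately show ?thesis
    using \<open>k < m\<close> that by blast
qed

lemma accepting_fa_aut_iff:
  "accepting fa_aut t \<phi> \<longleftrightarrow>
    (\<exists>k m g. k < m \<and> g \<in> {4, 5} \<and> \<phi> = fa_run k m g \<and> computation fa_aut t \<phi>)"
proof
  assume acc: "accepting fa_aut t \<phi>"
  then obtain k m g where "k < m" "g \<in> {4, 5}" "\<phi> = fa_run k m g"
    by (rule accepting_fa_aut_run)
  with acc show "\<exists>k m g. k < m \<and> g \<in> {4, 5} \<and> \<phi> = fa_run k m g \<and> computation fa_aut t \<phi>"
    unfolding accepting_def by blast
next
  assume "\<exists>k m g. k < m \<and> g \<in> {4, 5} \<and> \<phi> = fa_run k m g \<and> computation fa_aut t \<phi>"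
  then show "accepting fa_aut t \<phi>"
    unfolding accepting_def using parity_ok_fa_run by force
qed

lemma computation_fa_run_ex_iff:
  assumes "k < m"
  shows "(\<exists>g\<in>{4, 5}. computation fa_aut t (fa_run k m g)) \<longleftrightarrow>
    (\<exists>t'\<in>L_not_a1_or_not_a2. t = fa_tree k m t')"
  by (auto simp: computation_fa_run_iff[OF assms] L_not_a1_or_not_a2_def)

lemma lang_fa_aut: "lang fa_aut = L_fa"
proof -
  have "t \<in> lang fa_aut \<longleftrightarrow> t \<in> L_fa" for t
  proof -
    have "t \<in> lang fa_aut \<longleftrightarrow> (\<exists>k m. k < m \<and> (\<exists>g\<in>{4, 5}. computation fa_aut t (fa_run k m g)))"
      unfolding lang_def accepting_fa_aut_iff by blast
    also have "\<dots> \<longleftrightarrow> (\<exists>k m. k < m \<and> (\<exists>t'\<in>L_not_a1_or_not_a2. t = fa_tree k m t'))"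
      by (simp only: computation_fa_run_ex_iff cong: conj_cong)
    also have "\<dots> \<longleftrightarrow> t \<in> L_fa"
      by (auto simp: L_fa_def L_m_def L_km_eq_image)
    finally show ?thesis .
  qed
  then show ?thesis
    by blast
qed

lemma finitely_ambiguous_fa_aut: "finitely_ambiguous fa_aut"
  unfolding finitely_ambiguous_def
proof
  fix t
  define M where "M = (LEAST i. t (replicate i Lft) = A1)"
  have "{\<phi>. accepting fa_aut t \<phi>} \<subseteq> (\<lambda>(k, g). fa_run k M g) ` ({..<M} \<times> {4, 5})"
  proof
    fix \<phi>
    assume "\<phi> \<in> {\<phi>. accepting fa_aut t \<phi>}"
    then obtain k m g where km: "k < m" "g \<in> {4, 5}" "\<phi> = fa_run k m g" "computation fa_aut t \<phi>"
      by (auto simp: accepting_fa_aut_iff)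
    then obtain t' where "t = fa_tree k m t'"
      using computation_fa_run_iff by blast
    then have "M = m"
      unfolding M_def by (intro Least_equality) (simp_all add: fa_tree_def split: if_splits)
    with km show "\<phi> \<in> (\<lambda>(k, g). fa_run k M g) ` ({..<M} \<times> {4, 5})"
      by auto
  qed
  then show "finite {\<phi>. accepting fa_aut t \<phi>}"
    by (rule finite_subset) simp
qed

theorem lemma6p3:
  shows "\<exists>A :: (nat, sym) pta. wf_pta A \<and> finitely_ambiguous A \<and> lang A = L_fa"
  using wf_fa_aut finitely_ambiguous_fa_aut lang_fa_aut by blast

end
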